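(* For every $n \in \mathbb{N}$, $$ d^B_n(x) \;=\; \sum \binom{n}{r_0, r_1, \dots, r_k}\, x^{\lfloor (k+1)/2 \rfloor}\, d_{r_0}(x)\, A_{r_1}(x) \cdots A_{r_k}(x), $$ where the sum ranges over all $k \in \mathbb{N}$ and all sequences $(r_0, r_1, \dots, r_k)$ of nonnegative integers with $r_0 + \cdots + r_k = n$, and where the conventions $A_0(x) = 0$ and $d_0(x) = 1$ are used.
   Context: Type A: for a permutation $u$ of $[m]=\{1,\dots,m\}$, $\mathrm{exc}(u) = \#\{i : u(i) > i\}$ and $\mathrm{des}(u) = \#\{i \in [m-1] : u(i) > u(i+1)\}$. For $m \ge 1$, $A_m(x) = \sum_{u \in \mathfrak{S}_m} x^{\mathrm{des}(u)}$ is the Eulerian polynomial and $d_m(x) = \sum_{u} x^{\mathrm{exc}(u)}$ is the derangement polynomial, where the sum runs over permutations $u \in \mathfrak{S}_m$ without fixed points. Signed permutations: a signed permutation of $[n]$ is a pair consisting of a set $S = \{a_1, \dots, a_n\}$ with $a_i \in \{i, -i\}$ for each $i$, and a bijection $w : S \to S$. The set of all of them is $B_n$. - An element $a \in S$ is a $B$-excedance of $w$ if either $w(a) > a$, or $a < 0$ and $w(a) = a$ (all comparisons are in $\mathbb{Z}$). - $\mathrm{exc}_B(w)$ denotes the number of $B$-excedances of $w$. - $w$ is a derangement if there is no $a \in S$ with $a > 0$ and $w(a) = a$; the set of derangements is $\mathcal{D}^B_n$. - $d^B_n(x) = \sum_{w \in \mathcal{D}^B_n} x^{\mathrm{exc}_B(w)}$,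 with $d^B_0(x) = 1$. *)

theory Defs
  imports "HOL-Computational_Algebra.Polynomial" "HOL-Combinatorics.Permutations"
          "HOL-Library.Groups_Big_Fun"
begin

definition exc :: "nat \<Rightarrow> (nat \<Rightarrow> nat) \<Rightarrow> nat" where
  "exc m u = card {i \<in> {1..m}. u i > i}"

definition des :: "nat \<Rightarrow> (nat \<Rightarrow> nat) \<Rightarrow> nat" where
  "des m u = card {i \<in> {1..m-1}. u i > u (i+1)}"

definition eulerian_poly :: "nat \<Rightarrow> int poly" where
  "eulerian_poly m = (if m = 0 then 0 else
     (\<Sum>u \<in> {u. u permutes {1..m}}. monom 1 (des m u)))"

text \<open>Derangement polynomial (d_0 = 1 results automatically).\<close>
definition derangement_poly :: "nat \<Rightarrow> int poly" where
  "derangement_poly m =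
     (\<Sum>u \<in> {u. u permutes {1..m} \<and> (\<forall>i\<in>{1..m}. u i \<noteq> i)}. monom 1 (exc m u))"

text \<open>Signed permutations of [n]: a set S = {a_1,...,a_n}, a_i \<in> {i,-i},
  and a bijection w : S \<rightarrow> S, represented as a permutation of S
  (identity outside S).\<close>
definition signed_set :: "nat \<Rightarrow> int set \<Rightarrow> bool" where
  "signed_set n S \<longleftrightarrow> S \<subseteq> {a. a \<noteq> 0 \<and> \<bar>a\<bar> \<le> int n} \<and>
     (\<forall>i\<in>{1..n}. (int i \<in> S \<longleftrightarrow> - int i \<notin> S))"

definition signed_perms :: "nat \<Rightarrow> (int set \<times> (int \<Rightarrow> int)) set" where
  "signed_perms n = {(S, w). signed_set n S \<and> w permutes S}"

definition excB :: "int set \<times> (int \<Rightarrow> int) \<Rightarrow> nat" where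
  "excB p = (case p of (S, w) \<Rightarrow> card {a \<in> S. w a > a \<or> (a < 0 \<and> w a = a)})"

definition derangementsB :: "nat \<Rightarrow> (int set \<times> (int \<Rightarrow> int)) set" where
  "derangementsB n = {(S, w) \<in> signed_perms n. \<not> (\<exists>a\<in>S. a > 0 \<and> w a = a)}"

definition derangement_polyB :: "nat \<Rightarrow> int poly" where
  "derangement_polyB n = (\<Sum>p \<in> derangementsB n. monom 1 (excB p))"

definition multinomial :: "nat \<Rightarrow> nat list \<Rightarrow> nat" where
  "multinomial n rs = fact n div prod_list (map fact rs)"

end

theory Submission
  imports Defs "HOL-Computational_Algebra.Formal_Power_Series" "HOL-Combinatorics.Multiset_Permutations"
begin

text \<open>
  Let \<open>D(z) = \<Sum>\<^sub>n d\<^sub>n(x) z^n/n!\<close> and \<open>F(z) = 1 + \<Sum>\<^sub>n\<^sub>\<ge>\<^sub>1 A\<^sub>n(x) z^n/n!\<close>. Classifying permutations by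
  their fixed points gives \<open>F = e^z D\<close>. The fixed points of a signed derangement are negative and
  each is a \<open>B\<close>-excedance; classifying by them and by the signs of the other letters gives
  \<open>\<Sum>\<^sub>n d\<^sup>B\<^sub>n(x) z^n/n! = e^(xz) D(2z)\<close>. Inserting the largest letter into a permutation gives the
  Riccati equation \<open>F' = x F^2 + (1 - x) F\<close>, solved by \<open>F = (x - 1)/(x - e^((x-1)z))\<close>. With this
  closed form one checks \<open>e^(xz) D(2z) = D (1 + x(F - 1))/(1 - x(F - 1)^2)\<close>, and expanding
  \<open>(1 + xA)/(1 - xA^2) = \<Sum>\<^sub>k x^\<lfloor>(k+1)/2\<rfloor> A^k\<close> and comparing coefficients gives the formula.
  The series are compared after evaluating \<open>x\<close> at integers \<open>t \<noteq> 1\<close>, which determines the polynomials.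
\<close>

unbundle fps_syntax

section \<open>Excedances and derangements on an arbitrary ordered set\<close>

lemma ex_strict_mono_enumeration:
  fixes T :: "'a::linorder set"
  assumes "finite T"
  obtains h where "bij_betw h {1..card T} T" "strict_mono_on {1..card T} h"
proof
  define xs where "xs = sorted_list_of_set T"
  have xs: "sorted_wrt (<) xs" "set xs = T" "length xs = card T"
    using assms by (auto simp: xs_def)
  define h where "h i = xs ! (i - 1)" for i
  show mono: "strict_mono_on {1..card T} h"
    using xs(1,3) by (auto simp: h_def sorted_wrt_iff_nth_less intro!: strict_mono_onI)
  have "h ` {1..card T} = T"
  proof
    show "h ` {1..card T} \<subseteq> T" using xs by (auto simp: h_def)
    show "T \<subseteq> h ` {1..card T}"
    proof
      fix x assume "x \<in> T"
      then obtain k where "k < length xs" "xs ! k = x" using xs(2) by (metis in_set_conv_nth)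
      then show "x \<in> h ` {1..card T}"
        using xs(3) by (auto simp: h_def image_iff intro!: bexI[of _ "k + 1"])
    qed
  qed
  then show "bij_betw h {1..card T} T"
    using strict_mono_on_imp_inj_on[OF mono] by (simp add: bij_betw_def)
qed

definition exc_on :: "'a::linorder set \<Rightarrow> ('a \<Rightarrow> 'a) \<Rightarrow> nat" where
  "exc_on T u = card {i \<in> T. u i > i}"

definition derangements_on :: "'a set \<Rightarrow> ('a \<Rightarrow> 'a) set" where
  "derangements_on T = {u. u permutes T \<and> (\<forall>i\<in>T. u i \<noteq> i)}"

definition derangement_poly_on :: "'a::linorder set \<Rightarrow> int poly" where
  "derangement_poly_on T = (\<Sum>u\<in>derangements_on T. monom 1 (exc_on T u))"

lemma exc_on_conj_strict_mono:
  fixes h :: "'a::linorder \<Rightarrow> 'b::linorder"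
  assumes bij: "bij_betw h A B" and mono: "strict_mono_on A h" and u: "u permutes A"
  shows "exc_on B (\<lambda>x. if x \<in> B then h (u (inv_into A h x)) else x) = exc_on A u"
proof -
  have "{x \<in> B. (if x \<in> B then h (u (inv_into A h x)) else x) > x} = h ` {i \<in> A. u i > i}"
  proof (rule set_eqI, rule iffI)
    fix x assume x: "x \<in> {x \<in> B. (if x \<in> B then h (u (inv_into A h x)) else x) > x}"
    let ?i = "inv_into A h x"
    have i: "?i \<in> A" "h ?i = x"
      using bij x by (auto intro: bij_betw_inv_into_right inv_into_into simp: bij_betw_def)
    moreover have "h ?i < h (u ?i)" using x i(2) by auto
    ultimately have "u ?i > ?i"
      using strict_mono_on_less[OF mono] permutes_in_image[OF u] by blast
    then show "x \<in> h ` {i \<in> A. u i > i}" using i by force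
  next
    fix x assume "x \<in> h ` {i \<in> A. u i > i}"
    then obtain i where i: "i \<in> A" "u i > i" "x = h i" by auto
    then have "x \<in> B" "inv_into A h x = i"
      using bij by (auto simp: bij_betw_def)
    moreover have "h (u i) > h i"
      using i strict_mono_on_less[OF mono] permutes_in_image[OF u] by blast
    ultimately show "x \<in> {x \<in> B. (if x \<in> B then h (u (inv_into A h x)) else x) > x}"
      using i by auto
  qed
  moreover have "inj_on h {i \<in> A. u i > i}"
    using bij by (auto simp: bij_betw_def intro: inj_on_subset)
  ultimately show ?thesis unfolding exc_on_def by (simp add: card_image)
qed

lemma derangement_poly_on_eq:
  fixes T :: "'a::linorder set"
  assumes "finite T"
  shows "derangement_poly_on T = derangement_poly (card T)"
proof -
  obtain h where h: "bij_betw h {1..card T} T" "strict_mono_on {1..card T} h"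
    using ex_strict_mono_enumeration[OF assms] .
  let ?conj = "\<lambda>u x. if x \<in> T then h (u (inv_into {1..card T} h x)) else x"
  have "bij_betw ?conj (derangements_on {1..card T}) (derangements_on T)"
    using bij_betw_derangements[OF h(1)] unfolding derangements_on_def .
  then have "derangement_poly_on T
      = (\<Sum>u\<in>derangements_on {1..card T}. monom 1 (exc_on T (?conj u)))"
    unfolding derangement_poly_on_def by (rule sum.reindex_bij_betw[symmetric])
  also have "\<dots> = (\<Sum>u\<in>derangements_on {1..card T}. monom 1 (exc_on {1..card T} u))"
    using exc_on_conj_strict_mono[OF h] by (auto simp: derangements_on_def)
  finally show ?thesis
    by (simp add: derangement_poly_def derangement_poly_on_def derangements_on_def exc_on_def exc_def)
qed

section \<open>Counting permutations by their fixed points\<close>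

lemma sum_Pow_card:
  fixes g :: "nat \<Rightarrow> 'b::comm_semiring_1"
  assumes "finite A"
  shows "(\<Sum>F\<in>Pow A. g (card F)) = (\<Sum>k\<le>card A. of_nat (card A choose k) * g k)"
proof -
  have "(\<Sum>F\<in>Pow A. g (card F)) = (\<Sum>k\<le>card A. \<Sum>F\<in>{F \<in> Pow A. card F = k}. g (card F))"
    by (rule sum.group[symmetric]) (use assms in \<open>auto intro: card_mono\<close>)
  also have "\<dots> = (\<Sum>k\<le>card A. of_nat (card A choose k) * g k)"
    using n_subsets[OF assms] by (intro sum.cong) simp_all
  finally show ?thesis .
qed

definition fixed_points :: "'a set \<Rightarrow> ('a \<Rightarrow> 'a) \<Rightarrow> 'a set" where
  "fixed_points T w = {a \<in> T. w a = a}"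

lemma permutes_fixed_points_eq_iff:
  assumes "F \<subseteq> T"
  shows "w permutes T \<and> fixed_points T w = F \<longleftrightarrow> w \<in> derangements_on (T - F)"
proof
  assume w: "w permutes T \<and> fixed_points T w = F"
  have "w permutes (T - F)"
  proof (rule permutes_superset[of w T])
    show "w permutes T" using w by simp
    show "\<And>x. x \<in> T - (T - F) \<Longrightarrow> w x = x" using w assms by (auto simp: fixed_points_def)
  qed
  then show "w \<in> derangements_on (T - F)"
    using w by (auto simp: derangements_on_def fixed_points_def)
next
  assume w: "w \<in> derangements_on (T - F)"
  then have p: "w permutes (T - F)" by (simp add: derangements_on_def)
  have "w permutes T" by (rule permutes_subset[OF p]) auto
  moreover have "w a = a" if "a \<in> F" for a
    using permutes_not_in[OF p] that by auto
  ultimately show "w permutes T \<and> fixed_points T w = F"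
    using w assms by (auto simp: fixed_points_def derangements_on_def)
qed

lemma exc_on_Diff_fixed:
  assumes "w \<in> derangements_on (T - F)"
  shows "exc_on T w = exc_on (T - F) w"
proof -
  have "w a = a" if "a \<notin> T - F" for a
    using assms that by (auto simp: derangements_on_def permutes_not_in)
  then have "{i \<in> T. w i > i} = {i \<in> T - F. w i > i}" by force
  then show ?thesis by (simp add: exc_on_def)
qed

text \<open>A permutation of \<open>T\<close> is a choice of its fixed-point set \<open>F\<close> together with a derangement
  of \<open>T - F\<close>.\<close>
lemma sum_permutes_by_fixed_points:
  fixes T :: "'a::linorder set" and f :: "nat \<Rightarrow> int poly"
  assumes fin: "finite T" and K: "K \<subseteq> T"
  shows "(\<Sum>w\<in>{w. w permutes T \<and> fixed_points T w \<subseteq> K}.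
            f (card (fixed_points T w)) * monom 1 (exc_on T w))
       = (\<Sum>F\<in>Pow K. f (card F) * derangement_poly (card T - card F))"
proof -
  let ?P = "{w. w permutes T \<and> fixed_points T w \<subseteq> K}"
  let ?f = "\<lambda>w. f (card (fixed_points T w)) * monom 1 (exc_on T w)"
  have "finite ?P"
    using finite_permutations[OF fin] by (rule finite_subset[rotated]) auto
  then have "(\<Sum>w\<in>?P. ?f w) = (\<Sum>F\<in>Pow K. \<Sum>w\<in>{w \<in> ?P. fixed_points T w = F}. ?f w)"
    by (intro sum.group[symmetric]) (use fin K in \<open>auto intro: finite_subset\<close>)
  also have "\<dots> = (\<Sum>F\<in>Pow K. f (card F) * derangement_poly (card T - card F))"
  proof (rule sum.cong[OF refl])
    fix F assume "F \<in> Pow K"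
    then have FT: "F \<subseteq> T" and fiber: "{w \<in> ?P. fixed_points T w = F} = derangements_on (T - F)"
      using permutes_fixed_points_eq_iff[of F T] K by auto
    have "(\<Sum>w\<in>derangements_on (T - F). ?f w)
        = (\<Sum>w\<in>derangements_on (T - F). f (card F) * monom 1 (exc_on (T - F) w))"
    proof (rule sum.cong[OF refl])
      fix w assume w: "w \<in> derangements_on (T - F)"
      then have "fixed_points T w = F" using permutes_fixed_points_eq_iff[OF FT] by blast
      then show "?f w = f (card F) * monom 1 (exc_on (T - F) w)"
        using exc_on_Diff_fixed[OF w] by simp
    qed
    also have "\<dots> = f (card F) * derangement_poly_on (T - F)"
      by (simp add: derangement_poly_on_def sum_distrib_left)
    also have "\<dots> = f (card F) * derangement_poly (card T - card F)"
      using derangement_poly_on_eq[of "T - F"] fin FT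
      by (simp add: card_Diff_subset finite_subset)
    finally show "(\<Sum>w\<in>{w \<in> ?P. fixed_points T w = F}. ?f w)
        = f (card F) * derangement_poly (card T - card F)"
      unfolding fiber .
  qed
  finally show ?thesis .
qed

definition exc_poly :: "nat \<Rightarrow> int poly" where
  "exc_poly n = (\<Sum>u\<in>{u. u permutes {1..n}}. monom 1 (exc_on {1..n} u))"

lemma exc_poly_binomial_derangement_poly:
  "exc_poly n = (\<Sum>k\<le>n. of_nat (n choose k) * derangement_poly (n - k))"
proof -
  have "exc_poly n = (\<Sum>w\<in>{w. w permutes {1..n} \<and> fixed_points {1..n} w \<subseteq> {1..n}}.
                 (\<lambda>_. 1) (card (fixed_points {1..n} w)) * monom 1 (exc_on {1..n} w))"
    unfolding exc_poly_def by (rule sum.cong) (auto simp: fixed_points_def)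
  also have "\<dots> = (\<Sum>F\<in>Pow {1..n}. derangement_poly (n - card F))"
    using sum_permutes_by_fixed_points[of "{1..n}" "{1..n}" "\<lambda>_. 1"] by simp
  also have "\<dots> = (\<Sum>k\<le>n. of_nat (n choose k) * derangement_poly (n - k))"
    using sum_Pow_card[of "{1..n}" "\<lambda>k. derangement_poly (n - k)"] by simp
  finally show ?thesis .
qed

section \<open>The type B derangement polynomial\<close>

definition sign_choice :: "nat \<Rightarrow> nat set \<Rightarrow> int set" where
  "sign_choice n P = int ` P \<union> (\<lambda>i. - int i) ` ({1..n} - P)"

lemma signed_set_iff_sign_choice: "signed_set n S \<longleftrightarrow> S \<in> sign_choice n ` Pow {1..n}"
proof
  assume S: "signed_set n S"
  let ?P = "{i \<in> {1..n}. int i \<in> S}"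
  have "S = sign_choice n ?P"
  proof (rule set_eqI, rule iffI)
    fix a assume a: "a \<in> S"
    then have a0: "a \<noteq> 0" "\<bar>a\<bar> \<le> int n" using S by (auto simp: signed_set_def)
    show "a \<in> sign_choice n ?P"
    proof (cases "a > 0")
      case True
      then have "a = int (nat a)" "nat a \<in> {1..n}" using a0 by auto
      then show ?thesis using a unfolding sign_choice_def by (metis (mono_tags, lifting) UnI1 image_eqI mem_Collect_eq)
    next
      case False
      then have ai: "a = - int (nat (- a))" "nat (- a) \<in> {1..n}" using a0 by auto
      then have "int (nat (- a)) \<notin> S" using S a unfolding signed_set_def by metis
      then show ?thesis using ai unfolding sign_choice_def by (metis (no_types, lifting) DiffI UnI2 image_eqI mem_Collect_eq)
    qed
  next
    fix a assume "a \<in> sign_choice n ?P"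
    then show "a \<in> S" using S unfolding sign_choice_def signed_set_def by auto
  qed
  then show "S \<in> sign_choice n ` Pow {1..n}" by blast
next
  assume "S \<in> sign_choice n ` Pow {1..n}"
  then show "signed_set n S" by (auto simp: signed_set_def sign_choice_def)
qed

lemma inj_on_sign_choice: "inj_on (sign_choice n) (Pow {1..n})"
proof (rule inj_onI)
  fix P Q assume PQ: "P \<in> Pow {1..n}" "Q \<in> Pow {1..n}" "sign_choice n P = sign_choice n Q"
  have "P = {i. int i \<in> sign_choice n P}" "Q = {i. int i \<in> sign_choice n Q}"
    using PQ(1,2) by (auto simp: sign_choice_def)
  then show "P = Q" using PQ(3) by simp
qed

lemma finite_sign_choice: "finite (sign_choice n P)" if "P \<subseteq> {1..n}"
  using that unfolding sign_choice_def by (auto intro: finite_subset)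

lemma card_negatives_sign_choice:
  assumes "P \<subseteq> {1..n}"
  shows "card {a \<in> sign_choice n P. a < 0} = n - card P"
proof -
  have "{a \<in> sign_choice n P. a < 0} = (\<lambda>i. - int i) ` ({1..n} - P)"
    using assms by (auto simp: sign_choice_def)
  moreover have "inj_on (\<lambda>i::nat. - int i) ({1..n} - P)" by (auto simp: inj_on_def)
  ultimately show ?thesis
    using assms by (simp add: card_image card_Diff_subset finite_subset)
qed

lemma card_sign_choice:
  assumes "P \<subseteq> {1..n}"
  shows "card (sign_choice n P) = n"
proof -
  have "finite P" using assms finite_subset by blast
  have "card (sign_choice n P) = card (int ` P) + card ((\<lambda>i. - int i) ` ({1..n} - P))"
    unfolding sign_choice_def using \<open>finite P\<close> by (intro card_Un_disjoint) auto
  also have "\<dots> = card P + (n - card P)"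
    using assms \<open>finite P\<close> by (simp add: card_image inj_on_def card_Diff_subset)
  also have "\<dots> = n" using assms card_mono[of "{1..n}" P] by simp
  finally show ?thesis .
qed

lemma sum_Pow_Pow_Diff:
  fixes g :: "nat \<Rightarrow> 'b::comm_semiring_1"
  assumes "finite A"
  shows "(\<Sum>P\<in>Pow A. \<Sum>G\<in>Pow (A - P). g (card G)) = (\<Sum>G\<in>Pow A. 2 ^ card (A - G) * g (card G))"
proof -
  have "(\<Sum>P\<in>Pow A. \<Sum>G\<in>Pow (A - P). g (card G))
      = (\<Sum>P\<in>Pow A. \<Sum>G\<in>{G \<in> Pow A. G \<inter> P = {}}. g (card G))"
    by (intro sum.cong refl) auto
  also have "\<dots> = (\<Sum>G\<in>Pow A. \<Sum>P\<in>{P \<in> Pow A. G \<inter> P = {}}. g (card G))"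
    by (rule sum.swap_restrict) (use assms in auto)
  also have "\<dots> = (\<Sum>G\<in>Pow A. \<Sum>P\<in>Pow (A - G). g (card G))"
    by (intro sum.cong refl) auto
  also have "\<dots> = (\<Sum>G\<in>Pow A. 2 ^ card (A - G) * g (card G))"
    using assms by (simp add: card_Pow)
  finally show ?thesis .
qed

lemma derangementsB_eq_Sigma:
  "derangementsB n = (SIGMA S:sign_choice n ` Pow {1..n}.
      {w. w permutes S \<and> fixed_points S w \<subseteq> {a \<in> S. a < 0}})"
proof -
  have "(\<not> (\<exists>a\<in>S. a > 0 \<and> w a = a)) \<longleftrightarrow> fixed_points S w \<subseteq> {a \<in> S. a < 0}"
    if "signed_set n S" for S and w :: "int \<Rightarrow> int"
  proof -
    have "0 \<notin> S" using that by (auto simp: signed_set_def)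
    then show ?thesis by (auto simp: fixed_points_def) (metis linorder_neqE_linordered_idom)
  qed
  then show ?thesis
    unfolding derangementsB_def signed_perms_def using signed_set_iff_sign_choice[of n] by auto
qed

lemma excB_eq:
  assumes "fixed_points S w \<subseteq> {a \<in> S. a < 0}" "finite S"
  shows "excB (S, w) = card (fixed_points S w) + exc_on S w"
proof -
  have "{a \<in> S. w a > a \<or> (a < 0 \<and> w a = a)} = fixed_points S w \<union> {a \<in> S. w a > a}"
    using assms(1) by (auto simp: fixed_points_def)
  moreover have "fixed_points S w \<inter> {a \<in> S. w a > a} = {}" by (auto simp: fixed_points_def)
  ultimately show ?thesis
    unfolding excB_def exc_on_def using assms(2) by (simp add: card_Un_disjoint fixed_points_def)
qed

text \<open>The fixed points of a signed derangement are negative, and each of them is a \<open>B\<close>-excedance.\<close>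
lemma sum_excB_sign_choice:
  assumes "P \<subseteq> {1..n}"
  defines "S \<equiv> sign_choice n P"
  shows "(\<Sum>w | w permutes S \<and> fixed_points S w \<subseteq> {a \<in> S. a < 0}. monom 1 (excB (S, w)))
       = (\<Sum>G\<in>Pow ({1..n} - P). monom 1 (card G) * derangement_poly (n - card G))"
proof -
  have S: "finite S" "card S = n" "card {a \<in> S. a < 0} = card ({1..n} - P)"
    using assms finite_sign_choice card_sign_choice card_negatives_sign_choice
    by (simp_all add: card_Diff_subset finite_subset)
  have "(\<Sum>w | w permutes S \<and> fixed_points S w \<subseteq> {a \<in> S. a < 0}. monom 1 (excB (S, w)))
      = (\<Sum>w | w permutes S \<and> fixed_points S w \<subseteq> {a \<in> S. a < 0}.
           monom (1::int) (card (fixed_points S w)) * monom 1 (exc_on S w))"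
    using excB_eq S(1) by (intro sum.cong) (simp_all add: mult_monom)
  also have "\<dots> = (\<Sum>F\<in>Pow {a \<in> S. a < 0}. monom 1 (card F) * derangement_poly (n - card F))"
    using S by (subst sum_permutes_by_fixed_points) auto
  also have "\<dots> = (\<Sum>G\<in>Pow ({1..n} - P). monom 1 (card G) * derangement_poly (n - card G))"
    using S sum_Pow_card[of "{a \<in> S. a < 0}" "\<lambda>k. monom 1 k * derangement_poly (n - k)"]
      sum_Pow_card[of "{1..n} - P" "\<lambda>k. monom 1 k * derangement_poly (n - k)"] by simp
  finally show ?thesis .
qed

lemma derangement_polyB_binomial:
  "derangement_polyB n =
     (\<Sum>k\<le>n. of_nat (n choose k) * 2 ^ (n - k) * (monom 1 k * derangement_poly (n - k)))"
proof -
  let ?W = "\<lambda>S. {w. w permutes S \<and> fixed_points S w \<subseteq> {a \<in> S. a < 0}}"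
  let ?g = "\<lambda>k. monom 1 k * derangement_poly (n - k)"
  have "finite (?W (sign_choice n P))" if "P \<subseteq> {1..n}" for P
    using finite_permutations[OF finite_sign_choice[OF that]] by (rule finite_subset[rotated]) auto
  then have "derangement_polyB n
      = (\<Sum>S\<in>sign_choice n ` Pow {1..n}. \<Sum>w\<in>?W S. monom (1::int) (excB (S, w)))"
    unfolding derangement_polyB_def derangementsB_eq_Sigma
    by (subst sum.Sigma) (auto simp: case_prod_beta finite_sign_choice)
  also have "\<dots> = (\<Sum>P\<in>Pow {1..n}. \<Sum>w\<in>?W (sign_choice n P). monom 1 (excB (sign_choice n P, w)))"
    by (rule sum.reindex[OF inj_on_sign_choice, unfolded comp_def])
  also have "\<dots> = (\<Sum>P\<in>Pow {1..n}. \<Sum>G\<in>Pow ({1..n} - P). ?g (card G))"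
    by (intro sum.cong refl sum_excB_sign_choice) auto
  also have "\<dots> = (\<Sum>G\<in>Pow {1..n}. 2 ^ (n - card G) * ?g (card G))"
    by (subst sum_Pow_Pow_Diff) (auto intro!: sum.cong simp: card_Diff_subset finite_subset)
  also have "\<dots> = (\<Sum>k\<le>n. of_nat (n choose k) * (2 ^ (n - k) * ?g k))"
    using sum_Pow_card[of "{1..n}" "\<lambda>k. 2 ^ (n - k) * ?g k"] by simp
  finally show ?thesis by (simp add: mult.assoc)
qed

section \<open>Eulerian polynomials: excedances and descents\<close>

definition eulerian_step :: "nat \<Rightarrow> int poly \<Rightarrow> int poly" where
  "eulerian_step n p = p + smult (of_nat n) (monom 1 1 * p) + monom 1 1 * (1 - monom 1 1) * pderiv p"

lemma eulerian_step_sum: "eulerian_step n (sum f A) = (\<Sum>x\<in>A. eulerian_step n (f x))"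
  by (induction A rule: infinite_finite_induct)
    (simp_all add: eulerian_step_def pderiv_add algebra_simps smult_add_right)

lemma eulerian_step_monom:
  "eulerian_step n (monom 1 e) = monom (of_nat e + 1) e + monom (of_nat n - of_nat e) (Suc e)"
proof (cases e)
  case 0
  then show ?thesis by (simp add: eulerian_step_def pderiv_monom mult_monom smult_monom)
next
  case (Suc k)
  have "eulerian_step n (monom 1 e)
      = monom 1 e + monom (of_nat n) (Suc e) + (monom 1 1 - monom 1 2) * monom (of_nat e) k"
    unfolding eulerian_step_def
    by (simp add: pderiv_monom mult_monom smult_monom Suc algebra_simps numeral_2_eq_2)
  also have "\<dots> = monom 1 e + monom (of_nat n) (Suc e) + monom (of_nat e) e - monom (of_nat e) (Suc e)"
    by (simp add: algebra_simps mult_monom Suc)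
  also have "\<dots> = monom (of_nat e + 1) e + monom (of_nat n - of_nat e) (Suc e)"
    by (rule poly_eqI) (auto simp: coeff_monom)
  finally show ?thesis .
qed

text \<open>Of the \<open>n + 1\<close> ways to insert a new largest letter, those in \<open>K\<close> keep the statistic \<open>d\<close>
  and the others raise it by one.\<close>
lemma sum_insertions_eulerian_step:
  assumes "finite S" "K \<subseteq> S" "card S = Suc n" "card K = Suc d"
  shows "(\<Sum>j\<in>S. monom (1::int) (if j \<in> K then d else Suc d)) = eulerian_step n (monom 1 d)"
proof -
  have "d \<le> n" using card_mono[OF assms(1,2)] assms(3,4) by simp
  have "(\<Sum>j\<in>S. monom (1::int) (if j \<in> K then d else Suc d))
      = (\<Sum>j\<in>S - K. monom 1 (Suc d)) + (\<Sum>j\<in>K. monom 1 d)"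
    using assms(1,2) by (simp add: sum.subset_diff[of K S] sum.cong[of "S - K"])
  also have "\<dots> = of_nat (n - d) * monom 1 (Suc d) + of_nat (Suc d) * monom 1 d"
    using assms by (simp add: card_Diff_subset finite_subset)
  also have "\<dots> = eulerian_step n (monom 1 d)"
    unfolding eulerian_step_monom of_nat_mult_conv_smult using \<open>d \<le> n\<close>
    by (intro poly_eqI) (auto simp: coeff_monom of_nat_diff)
  finally show ?thesis .
qed

lemma exc_on_transpose_comp:
  fixes p :: "nat \<Rightarrow> nat"
  assumes p: "p permutes {1..n}" and i: "i \<in> {1..Suc n}"
  shows "exc_on {1..Suc n} (Transposition.transpose (Suc n) (p i) \<circ> p)
       = (if i \<in> insert (Suc n) {x \<in> {1..n}. p x > x} then exc_on {1..n} p
          else Suc (exc_on {1..n} p))"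
proof -
  let ?u = "Transposition.transpose (Suc n) (p i) \<circ> p" and ?E = "{x \<in> {1..n}. p x > x}"
  have fix_Suc_n: "p (Suc n) = Suc n" by (rule permutes_not_in[OF p]) simp
  have p_range: "p x \<in> {1..n}" if "x \<in> {1..n}" for x
    using permutes_in_image[OF p] that by simp
  show ?thesis
  proof (cases "i = Suc n")
    case True
    then have "{x \<in> {1..Suc n}. ?u x > x} = ?E"
      using fix_Suc_n by (auto simp: le_Suc_eq)
    then show ?thesis using True by (simp add: exc_on_def)
  next
    case False
    then have "i \<in> {1..n}" using i by auto
    then have last: "?u (Suc n) = p i" and at_i: "?u i = Suc n"
      using fix_Suc_n p_range by auto
    have other: "?u x = p x" if "x \<in> {1..n}" "x \<noteq> i" for x
    proof -
      have "p x \<noteq> p i" using permutes_inj[OF p] that(2) by (auto dest: injD)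
      then show ?thesis using p_range[OF that(1)] by simp
    qed
    have "{x \<in> {1..Suc n}. ?u x > x} = insert i {x \<in> {1..n} - {i}. p x > x}"
      using last at_i other \<open>i \<in> {1..n}\<close> p_range[of i] by (auto simp: le_Suc_eq)
    also have "\<dots> = insert i (?E - {i})" by auto
    moreover have "card (insert i (?E - {i})) = (if i \<in> ?E then card ?E else Suc (card ?E))"
      by (auto simp: card_insert_if insert_absorb Suc_diff_1 card_gt_0_iff)
    ultimately show ?thesis using False by (simp add: exc_on_def)
  qed
qed

lemma exc_poly_Suc: "exc_poly (Suc n) = eulerian_step n (exc_poly n)"
proof -
  let ?t = "Transposition.transpose (Suc n)"
  let ?f = "\<lambda>u. monom (1::int) (exc_on {1..Suc n} u)"
  have "exc_poly (Suc n) = (\<Sum>b\<in>{1..Suc n}. \<Sum>p | p permutes {1..n}. ?f (?t b \<circ> p))"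
    using sum_over_permutations_insert[of "{1..n}" "Suc n" ?f]
    by (simp add: exc_poly_def atLeastAtMostSuc_conv)
  also have "\<dots> = (\<Sum>p | p permutes {1..n}. \<Sum>b\<in>{1..Suc n}. ?f (?t b \<circ> p))"
    by (rule sum.swap)
  also have "\<dots> = (\<Sum>p | p permutes {1..n}. eulerian_step n (monom 1 (exc_on {1..n} p)))"
  proof (rule sum.cong[OF refl])
    fix p assume "p \<in> {p. p permutes {1..n}}"
    then have p: "p permutes {1..n}" by simp
    then have "bij_betw p {1..Suc n} {1..Suc n}"
      by (intro permutes_imp_bij permutes_subset[OF p]) auto
    then have "(\<Sum>b\<in>{1..Suc n}. ?f (?t b \<circ> p)) = (\<Sum>i\<in>{1..Suc n}. ?f (?t (p i) \<circ> p))"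
      by (rule sum.reindex_bij_betw[symmetric])
    also have "\<dots> = (\<Sum>i\<in>{1..Suc n}. monom 1 (if i \<in> insert (Suc n) {x \<in> {1..n}. p x > x}
                       then exc_on {1..n} p else Suc (exc_on {1..n} p)))"
      using exc_on_transpose_comp[OF p] by (intro sum.cong) simp_all
    also have "\<dots> = eulerian_step n (monom 1 (exc_on {1..n} p))"
      by (rule sum_insertions_eulerian_step) (auto simp: exc_on_def)
    finally show "(\<Sum>b\<in>{1..Suc n}. ?f (?t b \<circ> p)) = eulerian_step n (monom 1 (exc_on {1..n} p))" .
  qed
  also have "\<dots> = eulerian_step n (exc_poly n)" by (simp add: exc_poly_def eulerian_step_sum)
  finally show ?thesis .
qed

fun descents :: "'a::linorder list \<Rightarrow> nat" where
  "descents (x # y # zs) = (if y < x then 1 else 0) + descents (y # zs)"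
| "descents _ = 0"

lemma descents_append:
  "descents (xs @ ys) = descents xs + descents ys + (if xs \<noteq> [] \<and> ys \<noteq> [] \<and> hd ys < last xs then 1 else 0)"
proof (induction xs rule: descents.induct)
  case ("2_2" x)
  then show ?case by (cases ys) auto
qed simp_all

lemma descents_max_Cons:
  assumes "\<forall>y\<in>set R. y < M"
  shows "descents (M # R) = (if R = [] then 0 else Suc (descents R))"
  using assms by (cases R) auto

lemma descents_insert_max:
  assumes "\<forall>y\<in>set L. y < M" "\<forall>y\<in>set R. y < M"
  shows "descents (L @ M # R) = descents L + descents R + (if R = [] then 0 else 1)"
proof -
  have "L = [] \<or> \<not> M < last L" using assms(1) by (metis last_in_set order_less_asym)
  then show ?thesis using assms by (simp add: descents_append descents_max_Cons)
qed

lemma descents_conv_nth: "descents xs = card {i. Suc i < length xs \<and> xs ! Suc i < xs ! i}"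
proof (induction xs rule: descents.induct)
  case (1 x y zs)
  let ?S = "{i. Suc i < length (y # zs) \<and> (y # zs) ! Suc i < (y # zs) ! i}"
  have "{i. Suc i < length (x # y # zs) \<and> (x # y # zs) ! Suc i < (x # y # zs) ! i}
        = (if y < x then insert 0 (Suc ` ?S) else Suc ` ?S)"
  proof (intro set_eqI)
    fix i show "i \<in> {i. Suc i < length (x # y # zs) \<and> (x # y # zs) ! Suc i < (x # y # zs) ! i}
       \<longleftrightarrow> i \<in> (if y < x then insert 0 (Suc ` ?S) else Suc ` ?S)"
      by (cases i) auto
  qed
  moreover have "finite ?S" by auto
  ultimately show ?case using 1 by (simp add: card_image)
qed auto

lemma descents_map_strict_mono:
  assumes "strict_mono_on (set xs) h"
  shows "descents (map h xs) = descents xs"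
  using assms
proof (induction xs rule: descents.induct)
  case (1 x y zs)
  then have "h y < h x \<longleftrightarrow> y < x" by (simp add: strict_mono_on_less)
  moreover have "strict_mono_on (set (y # zs)) h"
    using "1.prems" by (rule monotone_on_subset) auto
  ultimately show ?case using 1 by simp
qed auto

definition des_poly :: "nat \<Rightarrow> int poly" where
  "des_poly k = (\<Sum>xs\<in>permutations_of_set {1..k}. monom 1 (descents xs))"

lemma sum_descents_permutations_of_set:
  fixes B :: "'a::linorder set"
  assumes "finite B"
  shows "(\<Sum>xs\<in>permutations_of_set B. monom (1::int) (descents xs)) = des_poly (card B)"
proof -
  obtain h where h: "bij_betw h {1..card B} B" "strict_mono_on {1..card B} h"
    using ex_strict_mono_enumeration[OF assms] .
  have inj: "inj_on h {1..card B}" and img: "h ` {1..card B} = B"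
    using h(1) by (auto simp: bij_betw_def)
  have P: "permutations_of_set B = map h ` permutations_of_set {1..card B}"
    using permutations_of_set_image_inj[OF inj] img by simp
  have injm: "inj_on (map h) (permutations_of_set {1..card B})"
    by (rule inj_on_mapI, rule inj_on_subset[OF inj]) (auto simp: permutations_of_set_def)
  have "(\<Sum>xs\<in>permutations_of_set B. monom (1::int) (descents xs))
      = (\<Sum>xs\<in>permutations_of_set {1..card B}. monom (1::int) (descents (map h xs)))"
    unfolding P by (subst sum.reindex[OF injm]) (simp add: comp_def)
  also have "\<dots> = des_poly (card B)"
    unfolding des_poly_def
    by (intro sum.cong refl arg_cong[where f = "monom 1"] descents_map_strict_mono
        monotone_on_subset[OF h(2)]) (auto simp: permutations_of_set_def)
  finally show ?thesis .
qed

definition splits :: "'a set \<Rightarrow> ('a list \<times> 'a list) set" where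
  "splits A = {(L, R). distinct (L @ R) \<and> set (L @ R) = A}"

lemma bij_betw_splits_insert:
  assumes "M \<notin> A"
  shows "bij_betw (\<lambda>(L, R). L @ M # R) (splits A) (permutations_of_set (insert M A))"
proof (rule bij_betw_imageI)
  have split: "M \<notin> set L" "M \<notin> set R" "distinct (L @ R)" "set L \<union> set R = A"
    if "(L, R) \<in> splits A" for L R
    using that assms by (auto simp: splits_def)
  show "inj_on (\<lambda>(L, R). L @ M # R) (splits A)"
  proof (rule inj_onI, clarify)
    fix L R L' R' assume "(L, R) \<in> splits A" "(L', R') \<in> splits A" "L @ M # R = L' @ M # R'"
    then show "L = L' \<and> R = R'" using split by (simp add: append_Cons_eq_iff)
  qed
  show "(\<lambda>(L, R). L @ M # R) ` splits A = permutations_of_set (insert M A)"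
  proof
    show "(\<lambda>(L, R). L @ M # R) ` splits A \<subseteq> permutations_of_set (insert M A)"
      using split by (force simp: permutations_of_set_def)
    show "permutations_of_set (insert M A) \<subseteq> (\<lambda>(L, R). L @ M # R) ` splits A"
    proof
      fix xs assume xs: "xs \<in> permutations_of_set (insert M A)"
      then obtain L R where LR: "xs = L @ M # R"
        by (metis insertI1 permutations_of_setD(1) split_list)
      with xs assms have "(L, R) \<in> splits A"
        by (auto simp: splits_def permutations_of_set_def)
      with LR show "xs \<in> (\<lambda>(L, R). L @ M # R) ` splits A" by force
    qed
  qed
qed

lemma sum_permutations_of_set_insert:
  assumes M: "M \<notin> A"
  shows "(\<Sum>xs\<in>permutations_of_set (insert M A). f xs) = (\<Sum>(L, R)\<in>splits A. f (L @ M # R))"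
  using sum.reindex_bij_betw[OF bij_betw_splits_insert[OF M], of f] by (simp add: case_prod_beta')

lemma bij_betw_take_drop_splits:
  "bij_betw (\<lambda>(ys, j). (take j ys, drop j ys)) (permutations_of_set A \<times> {0..card A}) (splits A)"
proof (rule bij_betw_byWitness[where f' = "\<lambda>(L, R). (L @ R, length L)"], goal_cases)
  case 1
  then show ?case by (auto simp: permutations_of_set_def distinct_card[symmetric])
next
  case 2
  then show ?case by auto
next
  case 3
  then show ?case by (auto simp: splits_def permutations_of_set_def simp del: distinct_append set_append)
next
  case 4
  have aux: "(L @ R, length L) \<in> permutations_of_set A \<times> {0..card A}" if "(L, R) \<in> splits A" for L R
  proof -
    have "distinct (L @ R)" "set (L @ R) = A" using that by (auto simp: splits_def)
    moreover then have "length (L @ R) = card A" using distinct_card by metis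
    ultimately show ?thesis by (auto simp: permutations_of_set_def)
  qed
  show ?case using aux by fastforce
qed

lemma sum_splits_take_drop:
  "(\<Sum>(L, R)\<in>splits A. g L R)
     = (\<Sum>ys\<in>permutations_of_set A. \<Sum>j\<in>{0..card A}. g (take j ys) (drop j ys))"
proof -
  have "(\<Sum>(L, R)\<in>splits A. g L R)
      = (\<Sum>(ys, j)\<in>permutations_of_set A \<times> {0..card A}. g (take j ys) (drop j ys))"
    using sum.reindex_bij_betw[OF bij_betw_take_drop_splits, of "\<lambda>(L, R). g L R"]
    by (simp add: case_prod_unfold)
  also have "\<dots> = (\<Sum>ys\<in>permutations_of_set A. \<Sum>j\<in>{0..card A}. g (take j ys) (drop j ys))"
    by (subst sum.cartesian_product) (rule sum.cong, auto)
  finally show ?thesis .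
qed

lemma card_descent_positions:
  "card {j. 0 < j \<and> j < length ys \<and> ys ! j < ys ! (j - 1)} = descents ys"
proof -
  have "{j. 0 < j \<and> j < length ys \<and> ys ! j < ys ! (j - 1)}
      = Suc ` {i. Suc i < length ys \<and> ys ! Suc i < ys ! i}"
    by (auto simp: image_iff) (metis Suc_pred)
  then show ?thesis by (simp add: descents_conv_nth card_image)
qed

text \<open>The descents of \<open>ys\<close> after inserting a largest letter at position \<open>j\<close>.\<close>
lemma descents_take_drop:
  assumes "j \<le> length ys"
  shows "descents (take j ys) + descents (drop j ys) + (if drop j ys = [] then 0 else 1)
       = (if j \<in> insert (length ys) {j. 0 < j \<and> j < length ys \<and> ys ! j < ys ! (j - 1)}
          then descents ys else Suc (descents ys))"
proof -
  have split: "descents ys = descents (take j ys) + descents (drop j ys)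
      + (if take j ys \<noteq> [] \<and> drop j ys \<noteq> [] \<and> hd (drop j ys) < last (take j ys) then 1 else 0)"
    using descents_append[of "take j ys" "drop j ys"] by simp
  consider "j = length ys" | "j = 0" "j < length ys" | "0 < j" "j < length ys"
    using assms by linarith
  then show ?thesis
  proof cases
    case 3
    then have "take j ys \<noteq> []" by auto
    with 3 have "hd (drop j ys) = ys ! j" "last (take j ys) = ys ! (j - 1)"
      by (simp_all add: hd_drop_conv_nth last_conv_nth min_def)
    with 3 show ?thesis using split by auto
  qed (use split in auto)
qed

lemma des_poly_Suc_splits:
  "des_poly (Suc n)
     = (\<Sum>(L, R)\<in>splits {1..n}. monom 1 (descents L + descents R + (if R = [] then 0 else 1)))"
proof -
  have S: "{1..Suc n} = insert (Suc n) {1..n}" by auto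
  have "des_poly (Suc n) = (\<Sum>(L, R)\<in>splits {1..n}. monom 1 (descents (L @ Suc n # R)))"
    unfolding des_poly_def S by (rule sum_permutations_of_set_insert) simp
  also have "\<dots> = (\<Sum>(L, R)\<in>splits {1..n}. monom 1 (descents L + descents R + (if R = [] then 0 else 1)))"
  proof (rule sum.cong[OF refl], clarify)
    fix L R assume "(L, R) \<in> splits {1..n}"
    then have "set L \<union> set R = {1..n}" by (simp add: splits_def)
    then have "set L \<subseteq> {1..n}" "set R \<subseteq> {1..n}" by blast+
    then have "\<forall>y\<in>set L. y < Suc n" "\<forall>y\<in>set R. y < Suc n" by auto
    then show "monom 1 (descents (L @ Suc n # R))
        = (monom 1 (descents L + descents R + (if R = [] then 0 else 1)) :: int poly)"
      by (simp add: descents_insert_max)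
  qed
  finally show ?thesis .
qed

lemma des_poly_Suc: "des_poly (Suc n) = eulerian_step n (des_poly n)"
proof -
  let ?ins = "\<lambda>L R. monom (1::int) (descents L + descents R + (if R = [] then 0 else 1))"
  have "des_poly (Suc n) = (\<Sum>ys\<in>permutations_of_set {1..n}. \<Sum>j\<in>{0..n}. ?ins (take j ys) (drop j ys))"
    unfolding des_poly_Suc_splits using sum_splits_take_drop[of ?ins "{1..n}"] by simp
  also have "\<dots> = (\<Sum>ys\<in>permutations_of_set {1..n}. eulerian_step n (monom 1 (descents ys)))"
  proof (rule sum.cong[OF refl])
    fix ys assume "ys \<in> permutations_of_set {1..n}"
    then have len: "length ys = n" using length_finite_permutations_of_set by fastforce
    let ?K = "insert n {j. 0 < j \<and> j < n \<and> ys ! j < ys ! (j - 1)}"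
    have "(\<Sum>j\<in>{0..n}. ?ins (take j ys) (drop j ys))
        = (\<Sum>j\<in>{0..n}. monom 1 (if j \<in> ?K then descents ys else Suc (descents ys)))"
      using descents_take_drop[of _ ys] len by (intro sum.cong) simp_all
    also have "\<dots> = eulerian_step n (monom 1 (descents ys))"
      using card_descent_positions[of ys] len
      by (intro sum_insertions_eulerian_step) (auto simp: card_insert_if)
    finally show "(\<Sum>j\<in>{0..n}. ?ins (take j ys) (drop j ys)) = eulerian_step n (monom 1 (descents ys))" .
  qed
  also have "\<dots> = eulerian_step n (des_poly n)" by (simp add: des_poly_def eulerian_step_sum)
  finally show ?thesis .
qed

lemma des_poly_eq_exc_poly: "des_poly n = exc_poly n"
proof (induction n)
  case 0
  have "{u. u permutes ({}::nat set)} = {id}" by (auto simp: permutes_empty)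
  then show ?case by (simp add: des_poly_def exc_poly_def exc_on_def)
next
  case (Suc n)
  then show ?case by (simp add: des_poly_Suc exc_poly_Suc)
qed

lemma finite_splits: "finite A \<Longrightarrow> finite (splits A)"
  using bij_betw_finite[OF bij_betw_take_drop_splits[of A]] by simp

lemma splits_fiber:
  assumes "B \<subseteq> A"
  shows "{x\<in>splits A. (case x of (L, R) \<Rightarrow> set L) = B} = permutations_of_set B \<times> permutations_of_set (A - B)"
proof (rule set_eqI, clarify, rule iffI)
  fix L R assume "(L, R) \<in> {x\<in>splits A. (case x of (L, R) \<Rightarrow> set L) = B}"
  then have h: "distinct L" "distinct R" "set L \<inter> set R = {}" "set L \<union> set R = A" "set L = B"
    by (auto simp: splits_def)
  then have "set R = A - B" by blast
  then show "(L, R) \<in> permutations_of_set B \<times> permutations_of_set (A - B)"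
    using h by (auto simp: permutations_of_set_def)
next
  fix L R assume "(L, R) \<in> permutations_of_set B \<times> permutations_of_set (A - B)"
  then have h: "distinct L" "distinct R" "set L = B" "set R = A - B"
    by (auto simp: permutations_of_set_def)
  then show "(L, R) \<in> {x\<in>splits A. (case x of (L, R) \<Rightarrow> set L) = B}"
    using assms by (auto simp: splits_def)
qed

lemma sum_descents_shifted:
  fixes C :: "nat set"
  assumes "finite C"
  shows "(\<Sum>R\<in>permutations_of_set C. monom (1::int) (descents R + (if R = [] then 0 else 1)))
       = (if C = {} then 1 else monom 1 1 * des_poly (card C))"
proof (cases "C = {}")
  case True then show ?thesis by simp
next
  case False
  have "(\<Sum>R\<in>permutations_of_set C. monom (1::int) (descents R + (if R = [] then 0 else 1)))
      = (\<Sum>R\<in>permutations_of_set C. monom 1 1 * monom (1::int) (descents R))"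
  proof (rule sum.cong[OF refl])
    fix R assume "R \<in> permutations_of_set C"
    then have "R \<noteq> []" using False by (auto simp: permutations_of_set_def)
    then show "monom (1::int) (descents R + (if R = [] then 0 else 1)) = monom 1 1 * monom 1 (descents R)"
      by (simp add: mult_monom)
  qed
  also have "\<dots> = monom 1 1 * des_poly (card C)"
    by (simp add: sum_distrib_left[symmetric] sum_descents_permutations_of_set[OF assms])
  finally show ?thesis using False by simp
qed

lemma des_poly_Suc_convolution:
  "des_poly (Suc n)
     = (\<Sum>k\<le>n. of_nat (n choose k) * (des_poly k * (if k = n then 1 else monom 1 1 * des_poly (n - k))))"
proof -
  let ?A = "{1..n}"
  let ?f = "\<lambda>(L, R). monom (1::int) (descents L + descents R + (if R = [] then 0 else 1))"
  have "des_poly (Suc n) = (\<Sum>x\<in>splits ?A. ?f x)" unfolding des_poly_Suc_splits by simp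
  also have "\<dots> = (\<Sum>B\<in>Pow ?A. \<Sum>x\<in>{x\<in>splits ?A. (case x of (L, R) \<Rightarrow> set L) = B}. ?f x)"
    by (rule sum.group[symmetric], rule finite_splits, auto simp: splits_def)
  also have "\<dots> = (\<Sum>B\<in>Pow ?A. des_poly (card B) * (if card B = n then 1 else monom 1 1 * des_poly (n - card B)))"
  proof (rule sum.cong[OF refl])
    fix B assume B: "B \<in> Pow ?A"
    have fB: "finite B" "finite (?A - B)" using B finite_subset by auto
    have "(\<Sum>x\<in>{x\<in>splits ?A. (case x of (L, R) \<Rightarrow> set L) = B}. ?f x)
        = (\<Sum>x\<in>permutations_of_set B \<times> permutations_of_set (?A - B). ?f x)"
      using splits_fiber[of B ?A] B by simp
    also have "\<dots> = (\<Sum>L\<in>permutations_of_set B. \<Sum>R\<in>permutations_of_set (?A - B).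
                       monom (1::int) (descents L) * monom 1 (descents R + (if R = [] then 0 else 1)))"
      by (subst sum.cartesian_product) (rule sum.cong, auto simp: mult_monom add.assoc)
    also have "\<dots> = (\<Sum>L\<in>permutations_of_set B. monom (1::int) (descents L))
                   * (\<Sum>R\<in>permutations_of_set (?A - B). monom 1 (descents R + (if R = [] then 0 else 1)))"
      by (simp add: sum_product)
    also have "\<dots> = des_poly (card B) * (if ?A - B = {} then 1 else monom 1 1 * des_poly (card (?A - B)))"
      by (simp only: sum_descents_permutations_of_set[OF fB(1)] sum_descents_shifted[OF fB(2)])
    also have "\<dots> = des_poly (card B) * (if card B = n then 1 else monom 1 1 * des_poly (n - card B))"
    proof -
      have c: "card (?A - B) = n - card B" using B by (simp add: card_Diff_subset finite_subset)
      have "?A - B = {} \<longleftrightarrow> card B = n"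
      proof
        assume "?A - B = {}" then have "B = ?A" using B by auto
        then show "card B = n" by simp
      next
        assume "card B = n" then have "card (?A - B) = 0" using c by simp
        then show "?A - B = {}" using fB by simp
      qed
      then show ?thesis using c by simp
    qed
    finally show "(\<Sum>x\<in>{x\<in>splits ?A. (case x of (L, R) \<Rightarrow> set L) = B}. ?f x)
        = des_poly (card B) * (if card B = n then 1 else monom 1 1 * des_poly (n - card B))" .
  qed
  also have "\<dots> = (\<Sum>k\<le>n. of_nat (n choose k) * (des_poly k * (if k = n then 1 else monom 1 1 * des_poly (n - k))))"
    using sum_Pow_card[of ?A "\<lambda>k. des_poly k * (if k = n then 1 else monom 1 1 * des_poly (n - k))"] by simp
  finally show ?thesis .
qed

lemma bij_betw_permutes_permutations_of_set:
  "bij_betw (\<lambda>\<sigma>. map \<sigma> [1..<Suc m]) {\<sigma>. \<sigma> permutes {1..m}} (permutations_of_set {1..m})"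
proof -
  let ?f = "\<lambda>\<sigma>. map \<sigma> [1..<Suc m]"
  have inj: "inj_on ?f {\<sigma>. \<sigma> permutes {1..m}}"
  proof (rule inj_onI)
    fix \<sigma> \<tau> assume s: "\<sigma> \<in> {\<sigma>. \<sigma> permutes {1..m}}" and t: "\<tau> \<in> {\<sigma>. \<sigma> permutes {1..m}}"
      and eq: "?f \<sigma> = ?f \<tau>"
    show "\<sigma> = \<tau>"
    proof
      fix x show "\<sigma> x = \<tau> x"
      proof (cases "x \<in> {1..m}")
        case True
        then have "x \<in> set [1..<Suc m]" by auto
        then show ?thesis using eq by (metis map_eq_conv)
      next
        case False
        then show ?thesis using s t by (simp add: permutes_not_in)
      qed
    qed
  qed
  have sub: "?f ` {\<sigma>. \<sigma> permutes {1..m}} \<subseteq> permutations_of_set {1..m}"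
  proof clarify
    fix \<sigma> assume s: "\<sigma> permutes {1..m}"
    have "set (map \<sigma> [1..<Suc m]) = \<sigma> ` {1..m}" by auto
    also have "\<dots> = {1..m}" using permutes_image[OF s] .
    finally have "set (map \<sigma> [1..<Suc m]) = {1..m}" .
    moreover have "distinct (map \<sigma> [1..<Suc m])"
      using permutes_inj_on[OF s] by (simp add: distinct_map inj_on_subset)
    ultimately show "map \<sigma> [1..<Suc m] \<in> permutations_of_set {1..m}" by (auto simp: permutations_of_set_def)
  qed
  have "card (?f ` {\<sigma>. \<sigma> permutes {1..m}}) = card {\<sigma>. \<sigma> permutes {1..m}}" by (rule card_image[OF inj])
  also have "\<dots> = fact m" by (rule card_permutations) auto
  also have "\<dots> = card (permutations_of_set {1..m})" by simp
  finally have "card (?f ` {\<sigma>. \<sigma> permutes {1..m}}) = card (permutations_of_set {1..m})" .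
  then have "?f ` {\<sigma>. \<sigma> permutes {1..m}} = permutations_of_set {1..m}"
    using sub by (intro card_subset_eq) auto
  then show ?thesis using inj by (simp add: bij_betw_def)
qed

lemma des_eq_descents: "des m \<sigma> = descents (map \<sigma> [1..<Suc m])"
proof -
  have "{i\<in>{1..m-1}. \<sigma> i > \<sigma> (i+1)} = Suc ` {i. Suc i < m \<and> \<sigma> (Suc (Suc i)) < \<sigma> (Suc i)}"
  proof (intro set_eqI iffI)
    fix x assume x: "x \<in> {i\<in>{1..m-1}. \<sigma> i > \<sigma> (i+1)}"
    then have "x = Suc (x - 1)" "Suc (x - 1) < m" by auto
    then show "x \<in> Suc ` {i. Suc i < m \<and> \<sigma> (Suc (Suc i)) < \<sigma> (Suc i)}"
      using x by (intro image_eqI[of _ _ "x - 1"]) auto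
  next
    fix x assume "x \<in> Suc ` {i. Suc i < m \<and> \<sigma> (Suc (Suc i)) < \<sigma> (Suc i)}"
    then show "x \<in> {i\<in>{1..m-1}. \<sigma> i > \<sigma> (i+1)}" by auto
  qed
  moreover have "{i. Suc i < length (map \<sigma> [1..<Suc m]) \<and> map \<sigma> [1..<Suc m] ! Suc i < map \<sigma> [1..<Suc m] ! i}
     = {i. Suc i < m \<and> \<sigma> (Suc (Suc i)) < \<sigma> (Suc i)}"
    by (auto simp: nth_map simp del: upt_Suc)
  ultimately show ?thesis unfolding des_def descents_conv_nth by (simp add: card_image)
qed

lemma eulerian_poly_eq_des_poly:
  assumes "m \<noteq> 0" shows "eulerian_poly m = des_poly m"
proof -
  have "eulerian_poly m = (\<Sum>u\<in>{u. u permutes {1..m}}. monom 1 (des m u))"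
    using assms by (simp add: eulerian_poly_def)
  also have "\<dots> = (\<Sum>u\<in>{u. u permutes {1..m}}. monom 1 (descents (map u [1..<Suc m])))"
    by (simp only: des_eq_descents)
  also have "\<dots> = des_poly m" unfolding des_poly_def by (rule sum.reindex_bij_betw[OF bij_betw_permutes_permutations_of_set])
  finally show ?thesis .
qed

section \<open>A Riccati equation for formal power series\<close>

lemma fps_riccati_unique:
  fixes F G :: "'a::field_char_0 fps"
  assumes "F $ 0 = G $ 0"
    and "fps_deriv F = fps_const c * F\<^sup>2 + fps_const (1 - c) * F"
    and "fps_deriv G = fps_const c * G\<^sup>2 + fps_const (1 - c) * G"
  shows "F = G"
proof -
  have "\<forall>m\<le>n. F $ m = G $ m" for n
  proof (induction n)
    case 0
    then show ?case using assms(1) by simp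
  next
    case (Suc n)
    have "(F\<^sup>2) $ n = (G\<^sup>2) $ n"
      unfolding power2_eq_square fps_mult_nth using Suc.IH by (intro sum.cong) auto
    then have "fps_deriv F $ n = fps_deriv G $ n"
      using Suc.IH by (simp add: assms(2,3))
    then have "F $ Suc n = G $ Suc n" by (simp del: of_nat_Suc)
    then show ?case using Suc.IH le_Suc_eq by auto
  qed
  then show ?thesis by (auto simp: fps_eq_iff)
qed

lemma fps_riccati_solution:
  fixes c :: "'a::field_char_0"
  assumes "c \<noteq> 1"
  defines "G \<equiv> fps_const (c - 1) * inverse (fps_const c - fps_exp (c - 1))"
  shows "fps_deriv G = fps_const c * G\<^sup>2 + fps_const (1 - c) * G" and "G $ 0 = 1"
proof -
  define C U where "C = fps_const c" and "U = fps_exp (c - 1)"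
  let ?V = "inverse (C - U)"
  have V0: "(C - U) $ 0 \<noteq> 0" using assms by (simp add: C_def U_def)
  have inv: "(C - U) * ?V = 1" by (rule inverse_mult_eq_1'[OF V0])
  have "fps_deriv ?V = (C - 1) * U * ?V\<^sup>2"
    using fps_inverse_deriv[OF V0] by (simp add: C_def U_def fps_const_sub[symmetric])
  then have "fps_deriv G = (C - 1) * ((C - 1) * U * ?V\<^sup>2)"
    by (simp add: G_def C_def U_def fps_const_sub[symmetric])
  also have "\<dots> = C * ((C - 1) * ?V)\<^sup>2 + (1 - C) * ((C - 1) * ?V)"
    using inv by algebra
  finally show "fps_deriv G = fps_const c * G\<^sup>2 + fps_const (1 - c) * G"
    by (simp add: G_def C_def U_def fps_const_sub[symmetric])
  show "G $ 0 = 1" using assms by (simp add: G_def)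
qed

text \<open>With \<open>A = F - 1\<close> this says \<open>e^(cz) D(2z) = D (1 + cA)/(1 - cA^2)\<close>; both sides become
  explicit through the closed form \<open>F = (c - 1)/(c - e^((c-1)z))\<close>.\<close>
lemma fps_riccati_doubling_identity:
  fixes c :: "'a::field_char_0" and F D :: "'a fps"
  assumes c: "c \<noteq> 1" and F0: "F $ 0 = 1"
    and ode: "fps_deriv F = fps_const c * F\<^sup>2 + fps_const (1 - c) * F"
    and D: "F = fps_exp 1 * D"
  shows "fps_exp c * (D oo fps_const 2 * fps_X) * (1 - fps_const c * (F - 1)\<^sup>2)
       = D * (1 + fps_const c * (F - 1))"
proof -
  define C U where "C = fps_const c" and "U = fps_exp (c - 1)"
  let ?V = "inverse (C - U)" and ?W = "inverse (C - U * U)"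
  let ?dbl = "\<lambda>f. f oo fps_const 2 * fps_X"
  have V0: "(C - U) $ 0 \<noteq> 0" and W0: "(C - U * U) $ 0 \<noteq> 0"
    using c by (simp_all add: C_def U_def)
  have inv: "(C - U) * ?V = 1" "(C - U * U) * ?W = 1"
    using inverse_mult_eq_1'[OF V0] inverse_mult_eq_1'[OF W0] by simp_all
  have C1: "fps_const (c - 1) = C - 1" by (simp add: C_def fps_const_sub[symmetric])
  have F: "F = (C - 1) * ?V"
    using fps_riccati_unique[OF _ ode fps_riccati_solution(1)[OF c]] F0
      fps_riccati_solution(2)[OF c] by (simp add: C_def U_def C1)
  have "?dbl U = U * U"
    by (simp add: U_def fps_exp_compose_linear fps_exp_add_mult[symmetric])
  then have "?dbl ?V = ?W"
    using V0 by (simp add: fps_inverse_compose fps_compose_sub_distrib C_def)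
  then have F2: "?dbl F = (C - 1) * ?W"
    by (simp add: F fps_compose_mult_distrib fps_compose_sub_distrib C_def)
  have E: "fps_exp (-1) * fps_exp 1 = (1 :: 'a fps)"
    by (simp add: fps_exp_add_mult[symmetric])
  have "D = fps_exp (-1) * F" using D E by (simp add: mult.assoc[symmetric])
  then have D2: "?dbl D = fps_exp (-2) * ?dbl F"
    by (simp add: fps_compose_mult_distrib fps_exp_compose_linear)
  have E2: "fps_exp c * fps_exp (-2) = fps_exp (-1) * U"
    by (simp add: U_def fps_exp_add_mult[symmetric])
  have key: "U * ((C - 1) * ?W) * (1 - C * ((C - 1) * ?V - 1)\<^sup>2)
      = (C - 1) * ?V * (1 + C * ((C - 1) * ?V - 1))"
    using inv by algebra
  have "fps_exp c * ?dbl D * (1 - C * (F - 1)\<^sup>2)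
      = fps_exp (-1) * (U * ((C - 1) * ?W) * (1 - C * ((C - 1) * ?V - 1)\<^sup>2))"
    by (simp add: D2 F2 flip: F mult.assoc E2)
  also have "\<dots> = D * (1 + C * (F - 1))"
    by (simp only: key) (simp add: \<open>D = fps_exp (-1) * F\<close> F ac_simps)
  finally show ?thesis by (simp add: C_def)
qed

section \<open>Expanding \<open>(1 + c A) / (1 - c A^2)\<close>\<close>

lemma fps_nth_mult_power_eq_0:
  fixes A Y :: "'a::comm_ring_1 fps"
  assumes "A $ 0 = 0" "k < m"
  shows "(Y * A ^ m) $ k = 0"
proof -
  have "A = fps_X * fps_shift 1 A"
    using assms(1) by (intro fps_ext) (simp add: fps_X_mult_nth)
  then have "Y * A ^ m = fps_X ^ m * (Y * fps_shift 1 A ^ m)"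
    by (metis mult.left_commute power_mult_distrib)
  then show ?thesis using assms(2) by (simp add: fps_X_power_mult_nth)
qed

lemma fps_geometric_even_odd_telescope:
  fixes A :: "'a::comm_ring_1 fps"
  shows "(1 - fps_const c * A\<^sup>2) * (\<Sum>k\<le>N. fps_const (c ^ (Suc k div 2)) * A ^ k)
       = 1 + fps_const c * A - fps_const (c ^ (Suc (Suc N) div 2)) * A ^ Suc N
           - fps_const (c ^ (Suc (Suc (Suc N)) div 2)) * A ^ Suc (Suc N)"
proof (induction N)
  case 0
  then show ?case by (simp add: algebra_simps power2_eq_square)
next
  case (Suc N)
  let ?e = "\<lambda>k. fps_const (c ^ (Suc k div 2)) :: 'a fps"
  have e: "?e (Suc (Suc (Suc N))) = fps_const c * ?e (Suc N)"
    by (simp flip: fps_const_mult)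
  have "(1 - fps_const c * A\<^sup>2) * (\<Sum>k\<le>Suc N. ?e k * A ^ k)
      = (1 - fps_const c * A\<^sup>2) * (\<Sum>k\<le>N. ?e k * A ^ k)
        + (1 - fps_const c * A\<^sup>2) * (?e (Suc N) * A ^ Suc N)"
    by (simp add: algebra_simps)
  also have "\<dots> = 1 + fps_const c * A - ?e (Suc (Suc N)) * A ^ Suc (Suc N)
      - ?e (Suc (Suc (Suc N))) * A ^ Suc (Suc (Suc N))"
    unfolding Suc.IH e by (simp add: algebra_simps power2_eq_square)
  finally show ?case .
qed

lemma fps_nth_eq_geometric_even_odd:
  fixes A B D :: "'a::field fps"
  assumes A0: "A $ 0 = 0"
    and B: "B * (1 - fps_const c * A\<^sup>2) = D * (1 + fps_const c * A)"
    and "n \<le> N"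
  shows "B $ n = (D * (\<Sum>k\<le>N. fps_const (c ^ (Suc k div 2)) * A ^ k)) $ n"
proof -
  define Q S where "Q = 1 - fps_const c * A\<^sup>2"
    and "S = (\<Sum>k\<le>N. fps_const (c ^ (Suc k div 2)) * A ^ k)"
  define R where "R = fps_const (c ^ (Suc (Suc N) div 2)) * A ^ Suc N
      + fps_const (c ^ (Suc (Suc (Suc N)) div 2)) * A ^ Suc (Suc N)"
  have QS: "Q * S = 1 + fps_const c * A - R"
    unfolding Q_def S_def R_def fps_geometric_even_odd_telescope by (simp add: algebra_simps)
  have "Q * (B - D * S) = B * Q - D * (Q * S)" by (simp add: algebra_simps)
  also have "\<dots> = D * R" unfolding QS B[folded Q_def] by (simp add: algebra_simps)
  finally have "Q * (B - D * S) = D * R" .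
  moreover have Q0: "Q $ 0 \<noteq> 0" using A0 by (simp add: Q_def power2_eq_square)
  ultimately have "B - D * S = (inverse Q * D * fps_const (c ^ (Suc (Suc N) div 2))) * A ^ Suc N
      + (inverse Q * D * fps_const (c ^ (Suc (Suc (Suc N)) div 2))) * A ^ Suc (Suc N)"
    by (metis (no_types, lifting) R_def inverse_mult_eq_1[OF Q0] mult.assoc mult_1 distrib_left)
  then have "(B - D * S) $ n = 0"
    using fps_nth_mult_power_eq_0[OF A0] \<open>n \<le> N\<close> by (simp del: power_Suc)
  then show ?thesis by (simp add: S_def)
qed

section \<open>Weak compositions and coefficients of products\<close>

definition weak_compositions :: "nat \<Rightarrow> nat \<Rightarrow> nat list set" where
  "weak_compositions k n = {rs. length rs = k \<and> sum_list rs = n}"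

lemma finite_weak_compositions: "finite (weak_compositions k n)"
proof (rule finite_subset)
  show "weak_compositions k n \<subseteq> {xs. set xs \<subseteq> {..n} \<and> length xs = k}"
    by (auto simp: weak_compositions_def dest: member_le_sum_list)
qed (rule finite_lists_length_eq, simp)

lemma sum_weak_compositions_Suc:
  "(\<Sum>rs\<in>weak_compositions (Suc k) n. f rs) = (\<Sum>i\<le>n. \<Sum>rs\<in>weak_compositions k (n - i). f (i # rs))"
proof -
  let ?Cons = "\<lambda>(i, rs). i # rs" and ?I = "SIGMA i:{..n}. weak_compositions k (n - i)"
  have "weak_compositions (Suc k) n = ?Cons ` ?I"
  proof (rule set_eqI, rule iffI)
    fix rs assume "rs \<in> weak_compositions (Suc k) n"
    then obtain i xs where "rs = i # xs" "length xs = k" "i + sum_list xs = n"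
      by (cases rs) (auto simp: weak_compositions_def)
    then show "rs \<in> ?Cons ` ?I"
      by (auto simp: weak_compositions_def image_iff intro!: bexI[of _ "(i, xs)"])
  qed (auto simp: weak_compositions_def)
  moreover have "inj_on ?Cons ?I" by (auto simp: inj_on_def)
  ultimately have "(\<Sum>rs\<in>weak_compositions (Suc k) n. f rs) = (\<Sum>x\<in>?I. f (?Cons x))"
    by (simp add: sum.reindex)
  also have "\<dots> = (\<Sum>i\<le>n. \<Sum>rs\<in>weak_compositions k (n - i). f (i # rs))"
    by (subst sum.Sigma) (auto simp: finite_weak_compositions intro!: sum.cong)
  finally show ?thesis .
qed

lemma fps_nth_power_weak_compositions:
  fixes P :: "'a::comm_ring_1 fps"
  shows "(P ^ k) $ n = (\<Sum>rs\<in>weak_compositions k n. prod_list (map (($) P) rs))"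
proof (induction k arbitrary: n)
  case 0
  have "weak_compositions 0 n = (if n = 0 then {[]} else {})"
    by (auto simp: weak_compositions_def)
  then show ?case by simp
next
  case (Suc k)
  then show ?case
    by (simp add: sum_weak_compositions_Suc fps_mult_nth sum_distrib_left atLeast0AtMost)
qed

lemma fps_nth_mult_power_weak_compositions:
  fixes P D :: "'a::comm_ring_1 fps"
  shows "(D * P ^ k) $ n
       = (\<Sum>rs\<in>weak_compositions (Suc k) n. D $ hd rs * prod_list (map (($) P) (tl rs)))"
  by (simp add: sum_weak_compositions_Suc fps_mult_nth fps_nth_power_weak_compositions
      sum_distrib_left atLeast0AtMost)

lemma prod_list_fact_dvd_fact_sum_list: "prod_list (map fact rs) dvd (fact (sum_list rs) :: nat)"
proof (induction rs)
  case (Cons r rs)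
  have "fact r * fact (sum_list rs) dvd (fact (r + sum_list rs) :: nat)"
    using binomial_fact_lemma[of r "r + sum_list rs"] by (metis add_diff_cancel_left' dvd_triv_left le_add1)
  with Cons.IH show ?case by (auto intro: dvd_trans)
qed simp

lemma real_multinomial:
  assumes "sum_list rs = n"
  shows "real (multinomial n rs) = fact n / prod_list (map fact rs)"
proof -
  have "prod_list (map fact rs) dvd (fact n :: nat)"
    using prod_list_fact_dvd_fact_sum_list[of rs] assms by simp
  moreover have "real (prod_list (map fact rs)) = prod_list (map fact rs)"
    by (induction rs) simp_all
  ultimately show ?thesis by (simp add: multinomial_def real_of_nat_div)
qed

section \<open>Exponential generating functions of the evaluated polynomials\<close>

definition egf_at :: "(nat \<Rightarrow> int poly) \<Rightarrow> int \<Rightarrow> real fps" where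
  "egf_at p t = Abs_fps (\<lambda>n. of_int (poly (p n) t) / fact n)"

lemma egf_at_nth [simp]: "egf_at p t $ n = of_int (poly (p n) t) / fact n"
  by (simp add: egf_at_def)

lemma des_poly_0: "des_poly 0 = 1"
  by (simp add: des_poly_def)

lemma egf_at_eulerian_poly: "egf_at eulerian_poly t = egf_at des_poly t - 1"
proof (rule fps_ext)
  fix n
  show "egf_at eulerian_poly t $ n = (egf_at des_poly t - 1) $ n"
    by (cases "n = 0") (simp add: eulerian_poly_def des_poly_0, simp add: eulerian_poly_eq_des_poly)
qed

lemma egf_at_des_poly_exp: "egf_at des_poly t = fps_exp 1 * egf_at derangement_poly t"
proof (rule fps_ext)
  fix n
  have "egf_at des_poly t $ n
      = (\<Sum>k\<le>n. of_nat (n choose k) * of_int (poly (derangement_poly (n - k)) t)) / fact n"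
    by (simp add: des_poly_eq_exc_poly exc_poly_binomial_derangement_poly poly_sum)
  also have "\<dots> = (\<Sum>k\<le>n. 1 / fact k * (of_int (poly (derangement_poly (n - k)) t) / fact (n - k)))"
    by (simp add: sum_divide_distrib binomial_fact field_simps)
  also have "\<dots> = (fps_exp 1 * egf_at derangement_poly t) $ n"
    by (simp add: fps_mult_nth atLeast0AtMost)
  finally show "egf_at des_poly t $ n = (fps_exp 1 * egf_at derangement_poly t) $ n" .
qed

lemma egf_at_des_poly_deriv:
  fixes t :: int
  defines "c \<equiv> real_of_int t" and "F \<equiv> egf_at des_poly t"
  shows "fps_deriv F = fps_const c * F\<^sup>2 + fps_const (1 - c) * F"
proof (rule fps_ext)
  fix n
  let ?a = "\<lambda>k. real_of_int (poly (des_poly k) t)"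
  have "?a (Suc n)
      = (\<Sum>k\<le>n. of_nat (n choose k) * (?a k * (if k = n then 1 else c * ?a (n - k))))"
    by (simp add: c_def des_poly_Suc_convolution poly_sum poly_monom if_distrib[of "\<lambda>p. poly p t"]
        if_distrib[of real_of_int] cong: if_cong)
  also have "\<dots> = (\<Sum>k\<le>n. c * (of_nat (n choose k) * (?a k * ?a (n - k)))
                     + (if k = n then (1 - c) * ?a n else 0))"
    by (intro sum.cong) (auto simp: des_poly_0 algebra_simps)
  finally have rec: "?a (Suc n) = c * (\<Sum>k\<le>n. of_nat (n choose k) * (?a k * ?a (n - k))) + (1 - c) * ?a n"
    by (simp add: sum.distrib sum_distrib_left)
  have "fps_deriv F $ n = ?a (Suc n) / fact n"
    by (simp add: F_def field_simps del: of_nat_Suc)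
  also have "\<dots> = c * (\<Sum>k\<le>n. ?a k / fact k * (?a (n - k) / fact (n - k))) + (1 - c) * (?a n / fact n)"
    unfolding rec
    by (simp add: add_divide_distrib sum_divide_distrib binomial_fact field_simps sum_distrib_left)
  also have "\<dots> = (fps_const c * F\<^sup>2 + fps_const (1 - c) * F) $ n"
  proof -
    have "(F\<^sup>2) $ n = (\<Sum>k\<le>n. ?a k / fact k * (?a (n - k) / fact (n - k)))"
      by (simp add: F_def power2_eq_square fps_mult_nth atLeast0AtMost)
    then show ?thesis by (simp add: F_def)
  qed
  finally show "fps_deriv F $ n = (fps_const c * F\<^sup>2 + fps_const (1 - c) * F) $ n" .
qed

lemma egf_at_derangement_polyB:
  "egf_at derangement_polyB t
     = fps_exp (of_int t) * (egf_at derangement_poly t oo fps_const 2 * fps_X)"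
proof (rule fps_ext)
  fix n
  let ?c = "real_of_int t" and ?d = "\<lambda>k. real_of_int (poly (derangement_poly k) t)"
  have "egf_at derangement_polyB t $ n
      = (\<Sum>k\<le>n. of_nat (n choose k) * 2 ^ (n - k) * (?c ^ k * ?d (n - k))) / fact n"
    by (simp add: derangement_polyB_binomial poly_sum poly_monom)
  also have "\<dots> = (\<Sum>k\<le>n. ?c ^ k / fact k * (2 ^ (n - k) * (?d (n - k) / fact (n - k))))"
    by (simp add: sum_divide_distrib binomial_fact field_simps)
  also have "\<dots> = (fps_exp ?c * (egf_at derangement_poly t oo fps_const 2 * fps_X)) $ n"
    by (simp add: fps_mult_nth atLeast0AtMost fps_exp_def)
  finally show "egf_at derangement_polyB t $ n
      = (fps_exp ?c * (egf_at derangement_poly t oo fps_const 2 * fps_X)) $ n" .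
qed

lemma egf_at_derangement_polyB_nth:
  assumes "t \<noteq> 1" and "n \<le> N"
  shows "egf_at derangement_polyB t $ n = (egf_at derangement_poly t *
           (\<Sum>k\<le>N. fps_const (of_int t ^ (Suc k div 2)) * egf_at eulerian_poly t ^ k)) $ n"
proof (rule fps_nth_eq_geometric_even_odd)
  show "egf_at eulerian_poly t $ 0 = 0"
    by (simp add: eulerian_poly_def)
  show "egf_at derangement_polyB t * (1 - fps_const (of_int t) * (egf_at eulerian_poly t)\<^sup>2)
      = egf_at derangement_poly t * (1 + fps_const (of_int t) * egf_at eulerian_poly t)"
    unfolding egf_at_derangement_polyB egf_at_eulerian_poly
    using assms(1) by (intro fps_riccati_doubling_identity egf_at_des_poly_deriv egf_at_des_poly_exp)
      (simp_all add: des_poly_0)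
qed (fact \<open>n \<le> N\<close>)

definition dB_term :: "nat \<Rightarrow> nat list \<Rightarrow> int poly" where
  "dB_term n rs = (if rs \<noteq> [] \<and> sum_list rs = n
     then smult (of_nat (multinomial n rs))
            (monom 1 (length rs div 2) * derangement_poly (hd rs) * prod_list (map eulerian_poly (tl rs)))
     else 0)"

text \<open>As \<open>A\<^sub>0 = 0\<close>, only sequences with \<open>r\<^sub>1, \<dots>, r\<^sub>k \<ge> 1\<close> contribute, so \<open>k \<le> n\<close>.\<close>
lemma dB_term_support: "{rs. dB_term n rs \<noteq> 0} \<subseteq> (\<Union>k\<le>n. weak_compositions (Suc k) n)"
proof
  fix rs assume "rs \<in> {rs. dB_term n rs \<noteq> 0}"
  then have rs: "rs \<noteq> []" "sum_list rs = n" "prod_list (map eulerian_poly (tl rs)) \<noteq> 0"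
    by (auto simp: dB_term_def split: if_splits)
  obtain r xs where r: "rs = r # xs" using rs(1) by (cases rs) auto
  have "\<forall>x\<in>set xs. 1 \<le> x"
    using rs(3) r by (auto simp: prod_list_zero_iff eulerian_poly_def Suc_le_eq)
  then have "length xs \<le> sum_list xs" by (induction xs) auto
  then show "rs \<in> (\<Union>k\<le>n. weak_compositions (Suc k) n)"
    using rs(2) r by (auto simp: weak_compositions_def)
qed

lemma Sum_any_dB_term:
  "Sum_any (dB_term n) = (\<Sum>k\<le>n. \<Sum>rs\<in>weak_compositions (Suc k) n. dB_term n rs)"
proof -
  have "Sum_any (dB_term n) = sum (dB_term n) (\<Union>k\<le>n. weak_compositions (Suc k) n)"
    using dB_term_support by (intro Sum_any.expand_superset) (auto simp: finite_weak_compositions)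
  also have "\<dots> = (\<Sum>k\<le>n. \<Sum>rs\<in>weak_compositions (Suc k) n. dB_term n rs)"
    by (rule sum.UNION_disjoint) (simp_all add: finite_weak_compositions, auto simp: weak_compositions_def)
  finally show ?thesis .
qed

lemma poly_dB_term:
  assumes "rs \<in> weak_compositions (Suc k) n"
  shows "real_of_int (poly (dB_term n rs) t) = of_int t ^ (Suc k div 2) * fact n *
           (egf_at derangement_poly t $ hd rs * prod_list (map (($) (egf_at eulerian_poly t)) (tl rs)))"
proof -
  obtain r xs where rs: "rs = r # xs" "length xs = k" "r + sum_list xs = n"
    using assms by (cases rs) (auto simp: weak_compositions_def)
  let ?e = "\<lambda>m. real_of_int (poly (eulerian_poly m) t)"
  have "real_of_int (poly (prod_list (map eulerian_poly xs)) t) = prod_list (map ?e xs)"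
    by (induction xs) simp_all
  moreover have "prod_list (map (($) (egf_at eulerian_poly t)) xs)
      = prod_list (map ?e xs) / prod_list (map fact xs)"
    by (induction xs) simp_all
  ultimately show ?thesis
    using rs real_multinomial[of rs n]
    by (simp add: dB_term_def poly_monom field_simps)
qed

lemma poly_Sum_any_dB_term:
  assumes "t \<noteq> 1"
  shows "poly (Sum_any (dB_term n)) t = poly (derangement_polyB n) t"
proof -
  let ?c = "real_of_int t" and ?D = "egf_at derangement_poly t" and ?A = "egf_at eulerian_poly t"
  have "real_of_int (poly (Sum_any (dB_term n)) t)
      = (\<Sum>k\<le>n. \<Sum>rs\<in>weak_compositions (Suc k) n. real_of_int (poly (dB_term n rs) t))"
    by (simp add: Sum_any_dB_term poly_sum)
  also have "\<dots> = (\<Sum>k\<le>n. ?c ^ (Suc k div 2) * fact n * (?D * ?A ^ k) $ n)"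
    by (simp add: poly_dB_term fps_nth_mult_power_weak_compositions sum_distrib_left)
  also have "\<dots> = fact n * (?D * (\<Sum>k\<le>n. fps_const (?c ^ (Suc k div 2)) * ?A ^ k)) $ n"
  proof -
    have "(?D * (fps_const a * Y)) $ n = a * (?D * Y) $ n" for a Y
      by (simp add: mult.left_commute[of ?D])
    then show ?thesis by (simp only: sum_distrib_left fps_sum_nth) (simp add: mult_ac)
  qed
  also have "\<dots> = real_of_int (poly (derangement_polyB n) t)"
    using egf_at_derangement_polyB_nth[OF assms, of n n] by (simp add: field_simps)
  finally show ?thesis by linarith
qed

theorem theorem1p1:
  fixes n :: nat
  shows "derangement_polyB n =
    (\<Sum>rs. if rs \<noteq> [] \<and> sum_list rs = n
           then smult (of_nat (multinomial n rs))
                  (monom 1 (length rs div 2) * derangement_poly (hd rs)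
                     * prod_list (map eulerian_poly (tl rs)))
           else 0)"
proof -
  have "infinite (UNIV - {1 :: int})" by simp
  moreover have "UNIV - {1} \<subseteq> {t. poly (derangement_polyB n - Sum_any (dB_term n)) t = 0}"
    using poly_Sum_any_dB_term by auto
  ultimately have "derangement_polyB n - Sum_any (dB_term n) = 0"
    using poly_roots_finite finite_subset by blast
  then show ?thesis by (simp add: dB_term_def[abs_def])
qed

end
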